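(* Let $(N_r)_{r\in\mathbb{Z}}$ be the Narayana sequence. For every integer $a$ put $p_a=N_a+3N_{a-2}$, and for positive integers $a$ put $q_a=-p_{-a}$. Then for every positive integer $a$ and every integer $m$ with $a<m$, $$N_{m}=p_{a}N_{m-a}+q_{a}N_{m-2a}+N_{m-3a}.$$
   Context: The Narayana sequence $(N_r)_{r\in\mathbb{Z}}$ is defined by $N_0=0$, $N_1=N_2=1$ and $N_r=N_{r-1}+N_{r-3}$ for all integers $r$ (extended to negative indices via $N_{r-3}=N_r-N_{r-1}$). *)

theory Defs
  imports Main
begin

fun narayana_nat :: "nat \<Rightarrow> int" where
  "narayana_nat 0 = 0"
| "narayana_nat (Suc 0) = 1"
| "narayana_nat (Suc (Suc 0)) = 1"
| "narayana_nat (Suc (Suc (Suc n))) = narayana_nat (Suc (Suc n)) + narayana_nat n"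

text \<open>Narayana numbers at nonpositive indices: narayana_neg k = N_(-k), obtained from
  N_(r-3) = N_r - N_(r-1): N_0 = 0, N_(-1) = N_2 - N_1 = 0, N_(-2) = N_1 - N_0 = 1,
  N_(-(k+3)) = N_(-k) - N_(-(k+1)).\<close>
fun narayana_neg :: "nat \<Rightarrow> int" where
  "narayana_neg 0 = 0"
| "narayana_neg (Suc 0) = 0"
| "narayana_neg (Suc (Suc 0)) = 1"
| "narayana_neg (Suc (Suc (Suc k))) = narayana_neg k - narayana_neg (Suc k)"

definition narayana :: "int \<Rightarrow> int" where
  "narayana r = (if r \<ge> 0 then narayana_nat (nat r) else narayana_neg (nat (- r)))"

definition narP :: "int \<Rightarrow> int" where
  "narP a = narayana a + 3 * narayana (a - 2)"

definition narQ :: "int \<Rightarrow> int" where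
  "narQ a = - narP (- a)"

end

theory Submission
  imports Defs
begin

(* As functions of m, both sides satisfy the Narayana recurrence, so it suffices to compare
  them at the three consecutive points m = 2a - 2, 2a - 1, 2a.  There the addition formula
  N(m + n) = N(n) N(m - 2) + N(n + 1) N(m - 3) + N(n + 2) N(m - 1) and the Cassini-type
  reflection formula N(-n) = N(n - 1)^2 - N(n - 2) N(n) turn every term into a quadratic form
  in N(a - 2), N(a - 1), N(a), and the comparison becomes a polynomial identity. *)

lemma narayana_rec: "narayana (r + 3) = narayana (r + 2) + narayana r"
proof (cases "r \<ge> 0")
  case True
  then obtain n where "r = int n"
    by (metis nonneg_eq_int)
  moreover have "nat (int n + 3) = Suc (Suc (Suc n))" "nat (int n + 2) = Suc (Suc n)"
    by auto
  ultimately show ?thesis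
    by (simp add: narayana_def)
next
  case False
  then consider "r \<in> {-3, -2, -1}" | "r \<le> -4"
    by force
  then show ?thesis
  proof cases
    case 2
    define k where "k = nat (- r - 4)"
    with 2 have "r = - int k - 4"
      by simp
    then have "nat (- (r + 3)) = Suc k" "nat (- (r + 2)) = Suc (Suc k)"
      "nat (- r) = Suc (Suc (Suc (Suc k)))"
      by auto
    with 2 show ?thesis
      by (simp add: narayana_def)
  qed (auto simp: narayana_def numeral_eq_Suc)
qed

lemma narayana_values:
  "narayana 0 = 0" "narayana 1 = 1" "narayana 2 = 1"
  "narayana (-1) = 0" "narayana (-2) = 1" "narayana (-3) = 0" "narayana (-4) = -1"
  by (simp_all add: narayana_def numeral_eq_Suc)

definition narayana_like :: "(int \<Rightarrow> int) \<Rightarrow> bool" where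
  "narayana_like f \<longleftrightarrow> (\<forall>r. f (r + 3) = f (r + 2) + f r)"

lemma narayana_like_narayana: "narayana_like narayana"
  by (simp add: narayana_like_def narayana_rec)

lemma narayana_like_shift: "narayana_like f \<Longrightarrow> narayana_like (\<lambda>r. f (r + c))"
  unfolding narayana_like_def by (metis add.commute add.left_commute)

lemma narayana_like_shift_diff: "narayana_like f \<Longrightarrow> narayana_like (\<lambda>r. f (r - c))"
  unfolding narayana_like_def by (metis diff_add_eq)

lemma narayana_like_add:
  "narayana_like f \<Longrightarrow> narayana_like g \<Longrightarrow> narayana_like (\<lambda>r. f r + g r)"
  by (simp add: narayana_like_def)

lemma narayana_like_diff:
  "narayana_like f \<Longrightarrow> narayana_like g \<Longrightarrow> narayana_like (\<lambda>r. f r - g r)"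
  by (simp add: narayana_like_def)

lemma narayana_like_mult: "narayana_like f \<Longrightarrow> narayana_like (\<lambda>r. c * f r)"
  by (simp add: narayana_like_def algebra_simps)

lemma narayana_like_eq_0:
  assumes "narayana_like f" and "f c = 0" "f (c + 1) = 0" "f (c + 2) = 0"
  shows "f r = 0"
proof -
  have rec: "f (r + 3) = f (r + 2) + f r" for r
    using assms(1) by (simp add: narayana_like_def)
  have "f r = 0 \<and> f (r + 1) = 0 \<and> f (r + 2) = 0"
  proof (induction r rule: int_induct[where k = c])
    case base
    then show ?case using assms(2-4) by simp
  next
    case (step1 i)
    then show ?case using rec[of i] by (simp add: add.assoc)
  next
    case (step2 i)
    then show ?case using rec[of "i - 1"] by (simp add: algebra_simps)
  qed
  then show ?thesis by simp
qed

lemma narayana_add: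
  "narayana (m + n) = narayana n * narayana (m - 2) + narayana (n + 1) * narayana (m - 3)
     + narayana (n + 2) * narayana (m - 1)"
proof -
  let ?f = "\<lambda>m. narayana (m + n) - (narayana n * narayana (m - 2)
     + narayana (n + 1) * narayana (m - 3) + narayana (n + 2) * narayana (m - 1))"
  have "narayana_like ?f"
    by (intro narayana_like_diff narayana_like_add narayana_like_mult narayana_like_shift
        narayana_like_shift_diff narayana_like_narayana)
  then have "?f m = 0"
    by (rule narayana_like_eq_0[where c = 0]) (simp_all add: narayana_values add.commute)
  then show ?thesis by simp
qed

lemma narayana_like_reflected_cassini:
  assumes "narayana_like f"
  shows "narayana_like (\<lambda>r. f (- r - 1) ^ 2 - f (- r - 2) * f (- r))"
  unfolding narayana_like_def
proof
  fix r :: int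
  define k where "k = - r - 5"
  then have r: "r = - k - 5"
    by simp
  have rec: "f (s + 3) = f (s + 2) + f s" for s
    using assms by (simp add: narayana_like_def)
  have "f (k + 1) ^ 2 - f k * f (k + 2)
      = (f (k + 2) ^ 2 - f (k + 1) * f (k + 3)) + (f (k + 4) ^ 2 - f (k + 3) * f (k + 5))"
    using rec[of k] rec[of "k + 1"] rec[of "k + 2"]
    by (simp add: add.assoc power2_eq_square algebra_simps)
  then show "f (- (r + 3) - 1) ^ 2 - f (- (r + 3) - 2) * f (- (r + 3))
      = f (- (r + 2) - 1) ^ 2 - f (- (r + 2) - 2) * f (- (r + 2))
        + (f (- r - 1) ^ 2 - f (- r - 2) * f (- r))"
    by (simp add: r algebra_simps)
qed

lemma narayana_uminus: "narayana (- n) = narayana (n - 1) ^ 2 - narayana (n - 2) * narayana n"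
proof -
  let ?f = "\<lambda>r. narayana r - (narayana (- r - 1) ^ 2 - narayana (- r - 2) * narayana (- r))"
  have "narayana_like ?f"
    by (intro narayana_like_diff narayana_like_narayana narayana_like_reflected_cassini)
  then have "?f (- n) = 0"
    by (rule narayana_like_eq_0[where c = 0]) (simp_all add: narayana_values)
  then show ?thesis by simp
qed

lemma narayana_rec_step:
  "narayana m = narP a * narayana (m - a) + narQ a * narayana (m - 2 * a) + narayana (m - 3 * a)"
proof -
  define g where "g k = narayana (k + a)" for k
  have "narayana_like g"
    unfolding g_def by (intro narayana_like_shift narayana_like_narayana)
  then have rec: "g (k + 3) = g (k + 2) + g k" for k
    by (simp add: narayana_like_def)
  have window: "g (-3) = g 0 - g (-1)" "g 1 = g 0 + g (-2)" "g 2 = g 0 + g (-2) + g (-1)"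
    using rec[of "-3"] rec[of "-2"] rec[of "-1"] by simp_all
  have p: "narP a = g 0 + 3 * g (-2)"
    by (simp add: narP_def g_def)
  have q: "narQ a = - (g (-1) ^ 2 - g (-2) * g 0) - 3 * (g 1 ^ 2 - g 0 * g 2)"
    using narayana_uminus[of a] narayana_uminus[of "a + 2"]
    by (simp add: narQ_def narP_def g_def algebra_simps)
  let ?F = "\<lambda>m. narayana m - (narP a * narayana (m - a) + narQ a * narayana (m - 2 * a)
    + narayana (m - 3 * a))"
  have F_at: "?F (2 * a + j) = g (-2) * g j + g (-3) * g (j + 1) + g (-1) * g (j + 2)
      - (narP a * g j + narQ a * narayana j + (g (- j - 1) ^ 2 - g (- j - 2) * g (- j)))" for j
    using narayana_add[of a "a + j"] narayana_uminus[of "a - j"]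
    by (simp add: g_def algebra_simps mult_2)
  have "narayana_like ?F"
    by (intro narayana_like_diff narayana_like_add narayana_like_mult narayana_like_shift_diff
        narayana_like_narayana)
  then have "?F m = 0"
    by (rule narayana_like_eq_0[where c = "2 * a - 2"])
      (use F_at[of "-2"] F_at[of "-1"] F_at[of 0] in
        \<open>simp_all add: window p q narayana_values algebra_simps power2_eq_square\<close>)
  then show ?thesis
    by simp
qed

theorem theorem3:
  fixes a m :: int
  assumes "0 < a" and "a < m"
  shows "narayana m = narP a * narayana (m - a) + narQ a * narayana (m - 2 * a)
                      + narayana (m - 3 * a)"
  \<comment> \<open>The identity holds for all integers a and m.\<close>
  by (rule narayana_rec_step)

end
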